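(* Let $(\rho,\sigma)\in\mathfrak V$ and $P,Q\in W^{(l)}\setminus\{0\}$ with $[Q,P]\in K^\times$. If $[Q,P]_{\rho,\sigma}=0$, then there exists $(\rho'',\sigma'')\in\overline{\mathfrak V}$ with $(\rho'',\sigma'')<(\rho,\sigma)$ such that $[Q,P]_{\rho',\sigma'}=0$ for all $(\rho',\sigma')\in\mathfrak V$ with $(\rho'',\sigma'')<(\rho',\sigma')<(\rho,\sigma)$.
   Context: $K$ is a field of characteristic zero, $l\in\mathbb{N}$. $W^{(l)}$ is the associative $K$-algebra with $K$-basis $\{X^{i/l}Y^j:i\in\mathbb{Z},j\in\mathbb{N}_0\}$, powers of $X$ multiplying as Laurent monomials and $[Y,X^\alpha]=\alpha X^{\alpha-1}$ for $\alpha\in\frac1l\mathbb{Z}$. $\Psi^{(l)}(X^{i/l}Y^j)=x^{i/l}y^j\in K[x^{\pm1/l},y]$; supports are sets of exponents with nonzero coefficient. $\overline{\mathfrak V}=\{(\rho,\sigma)\in\mathbb{Z}^2:\gcd(\rho,\sigma)=1,\rho+\sigma\ge0\}$, $\mathfrak V$ the subset with $\rho+\sigma>0$. Total order on $\overline{\mathfrak V}$: $(1,-1)<(\rho,\sigma)<(-1,1)$ for $(\rho,\sigma)\in\mathfrak V$, and on $\mathfrak V$, $(\rho_1,\sigma_1)\le(\rho,\sigma)$ iff $\rho_1\sigma-\sigma_1\rho\ge0$. For $P\ne0$, $v_{\rho,\sigma}(P)=\max\{\rho a+\sigma b:(a,b)\in\mathrm{Supp}(P)\}$, $\ell_{\rho,\sigma}(P)$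 = sum of terms of $\Psi^{(l)}(P)$ attaining it. $[Q,P]_{\rho,\sigma}:=0$ if $[Q,P]=0$ or $v_{\rho,\sigma}([Q,P])<v_{\rho,\sigma}(Q)+v_{\rho,\sigma}(P)-(\rho+\sigma)$, and $:=\ell_{\rho,\sigma}([Q,P])$ otherwise. *)

theory Defs
  imports Complex_Main
begin

text \<open>An element of W^(l) is represented by its coefficient function:
  F (i, j) is the coefficient of the basis element X^(i/l) Y^j.  Elements of
  W^(l) are exactly the finitely supported such functions.\<close>

type_synonym 'k wl = "int \<times> nat \<Rightarrow> 'k"

definition wsupp :: "'k::zero wl \<Rightarrow> (int \<times> nat) set" where
  "wsupp F = {p. F p \<noteq> 0}"

definition is_wl :: "'k::zero wl \<Rightarrow> bool" where
  "is_wl F \<longleftrightarrow> finite (wsupp F)"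

definition falling :: "'k::field \<Rightarrow> nat \<Rightarrow> 'k" where
  "falling x m = (\<Prod>t<m. x - of_nat t)"

text \<open>Product in W^(l), from the normal-ordering rule
  Y^j X^b = sum_m (j choose m) b(b-1)...(b-m+1) X^(b-m) Y^(j-m), which follows from
  [Y, X^b] = b X^(b-1):
  (X^(i/l) Y^j)(X^(i'/l) Y^k) = sum_(m \<le> j) (j choose m) falling (i'/l) m X^((i+i'-l m)/l) Y^(j+k-m).\<close>
definition wmult :: "nat \<Rightarrow> 'k::field_char_0 wl \<Rightarrow> 'k wl \<Rightarrow> 'k wl" where
  "wmult l F G = (\<lambda>(a, b).
     \<Sum>((i, j), (i', k)) \<in> wsupp F \<times> wsupp G.
       \<Sum>m \<in> {m. m \<le> j \<and> i + i' - int l * int m = a \<and> j + k - m = b}.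
         F (i, j) * G (i', k) * of_nat (j choose m) * falling (of_int i' / of_nat l) m)"

definition wcomm :: "nat \<Rightarrow> 'k::field_char_0 wl \<Rightarrow> 'k wl \<Rightarrow> 'k wl" where
  "wcomm l Q P = (\<lambda>p. wmult l Q P p - wmult l P Q p)"

definition wconst :: "'k::zero \<Rightarrow> 'k wl" where
  "wconst c = (\<lambda>p. if p = (0, 0) then c else 0)"

definition wval :: "nat \<Rightarrow> int \<Rightarrow> int \<Rightarrow> 'k::zero wl \<Rightarrow> rat" where
  "wval l \<rho> \<sigma> F = Max ((\<lambda>(i, j). of_int \<rho> * (of_int i / of_nat l) + of_int \<sigma> * of_nat j) ` wsupp F)"

text \<open>Leading form: terms whose support point attains the valuation
  (as coefficient function, identifying W^(l) and K[x^(\<pm>1/l), y] via \<Psi>^(l)).\<close>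
definition wlead :: "nat \<Rightarrow> int \<Rightarrow> int \<Rightarrow> 'k::zero wl \<Rightarrow> 'k wl" where
  "wlead l \<rho> \<sigma> F = (\<lambda>(i, j).
     if of_int \<rho> * (of_int i / of_nat l) + of_int \<sigma> * of_nat j = wval l \<rho> \<sigma> F then F (i, j) else 0)"

definition wcomm_rs :: "nat \<Rightarrow> int \<Rightarrow> int \<Rightarrow> 'k::field_char_0 wl \<Rightarrow> 'k wl \<Rightarrow> 'k wl" where
  "wcomm_rs l \<rho> \<sigma> Q P =
     (if wcomm l Q P = (\<lambda>_. 0) \<or>
         wval l \<rho> \<sigma> (wcomm l Q P) < wval l \<rho> \<sigma> Q + wval l \<rho> \<sigma> P - of_int (\<rho> + \<sigma>)
      then (\<lambda>_. 0) else wlead l \<rho> \<sigma> (wcomm l Q P))"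

definition Vbar :: "(int \<times> int) set" where
  "Vbar = {(\<rho>, \<sigma>). gcd \<rho> \<sigma> = 1 \<and> \<rho> + \<sigma> \<ge> 0}"

definition Vset :: "(int \<times> int) set" where
  "Vset = {(\<rho>, \<sigma>). gcd \<rho> \<sigma> = 1 \<and> \<rho> + \<sigma> > 0}"

definition dir_le :: "int \<times> int \<Rightarrow> int \<times> int \<Rightarrow> bool" where
  "dir_le a b \<longleftrightarrow>
     a = (1, -1) \<or> b = (-1, 1) \<or>
     (a \<in> Vset \<and> b \<in> Vset \<and> fst a * snd b - snd a * fst b \<ge> 0)"

definition dir_less :: "int \<times> int \<Rightarrow> int \<times> int \<Rightarrow> bool" where
  "dir_less a b \<longleftrightarrow> dir_le a b \<and> a \<noteq> b"

end

theory Submission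
  imports Defs
begin

text \<open>Since [Q,P] = c is a nonzero constant, its valuation is 0 in every direction, so
  [Q,P]_{\<rho>,\<sigma>} = 0 just says that the excess v(Q) + v(P) - (\<rho>+\<sigma>) is positive.
  The excess is a maximum of linear forms in (\<rho>,\<sigma>); taking the support points of Q
  and P that realise the valuations at (\<rho>,\<sigma>) gives a linear minorant that is still
  positive at (\<rho>,\<sigma>). Choosing (\<rho>'',\<sigma>'') with \<rho>''\<sigma> - \<sigma>''\<rho> = 1 and close enough to
  (\<rho>,\<sigma>) that the minorant is positive there too, every direction strictly between is
  a nonnegative integer combination of the two, so the minorant and hence the excess
  stay positive.\<close>

lemma wsupp_wconst: "c \<noteq> 0 \<Longrightarrow> wsupp (wconst c) = {(0, 0)}"
  by (auto simp: wsupp_def wconst_def split: if_splits)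

lemma wval_wconst: "c \<noteq> 0 \<Longrightarrow> wval l a b (wconst c) = 0"
  by (simp add: wval_def wsupp_wconst)

lemma wcomm_rs_eq_0_iff_const:
  fixes Q P :: "'k::field_char_0 wl"
  assumes c: "c \<noteq> 0" and comm: "wcomm l Q P = wconst c"
  shows "wcomm_rs l a b Q P = (\<lambda>_. 0) \<longleftrightarrow> 0 < wval l a b Q + wval l a b P - of_int (a + b)"
proof -
  have "wconst c (0, 0) \<noteq> 0" "wlead l a b (wconst c) (0, 0) \<noteq> 0"
    using c wval_wconst[OF c] by (simp_all add: wlead_def wconst_def)
  then have "wconst c \<noteq> (\<lambda>_. 0)" "wlead l a b (wconst c) \<noteq> (\<lambda>_. 0)"
    by fastforce+
  then show ?thesis
    unfolding wcomm_rs_def comm using wval_wconst[OF c] by auto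
qed

lemma wval_ge:
  fixes F :: "'k::zero wl"
  assumes "is_wl F" "(i, j) \<in> wsupp F"
  shows "of_int a * (of_int i / of_nat l) + of_int b * of_nat j \<le> wval l a b F"
  unfolding wval_def by (rule Max_ge) (use assms in \<open>auto simp: is_wl_def\<close>)

lemma wval_attained:
  fixes F :: "'k::zero wl"
  assumes "is_wl F" "F \<noteq> (\<lambda>_. 0)"
  obtains i j where "(i, j) \<in> wsupp F"
    and "wval l a b F = of_int a * (of_int i / of_nat l) + of_int b * of_nat j"
proof -
  have "wsupp F \<noteq> {}" using assms(2) by (auto simp: wsupp_def)
  have "wval l a b F \<in> (\<lambda>(i, j). of_int a * (of_int i / of_nat l) + of_int b * of_nat j) ` wsupp F"
    unfolding wval_def by (rule Max_in) (use assms \<open>wsupp F \<noteq> {}\<close> in \<open>auto simp: is_wl_def\<close>)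
  then show ?thesis using that by auto
qed

lemma wval_excess_supporting_linear:
  fixes Q P :: "'k::zero wl"
  assumes "is_wl Q" "is_wl P" "Q \<noteq> (\<lambda>_. 0)" "P \<noteq> (\<lambda>_. 0)"
  obtains \<alpha> \<beta> :: rat
  where "\<And>a b. of_int a * \<alpha> + of_int b * \<beta> \<le> wval l a b Q + wval l a b P - of_int (a + b)"
    and "of_int \<rho> * \<alpha> + of_int \<sigma> * \<beta> = wval l \<rho> \<sigma> Q + wval l \<rho> \<sigma> P - of_int (\<rho> + \<sigma>)"
proof -
  obtain i0 j0 where q: "(i0, j0) \<in> wsupp Q"
    "wval l \<rho> \<sigma> Q = of_int \<rho> * (of_int i0 / of_nat l) + of_int \<sigma> * of_nat j0"
    using wval_attained[OF assms(1,3)] by blast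
  obtain i1 j1 where p: "(i1, j1) \<in> wsupp P"
    "wval l \<rho> \<sigma> P = of_int \<rho> * (of_int i1 / of_nat l) + of_int \<sigma> * of_nat j1"
    using wval_attained[OF assms(2,4)] by blast
  show ?thesis
  proof
    fix a b :: int
    show "of_int a * (of_int i0 / of_nat l + of_int i1 / of_nat l - 1) + of_int b * (of_nat j0 + of_nat j1 - 1)
          \<le> wval l a b Q + wval l a b P - of_int (a + b)"
      using wval_ge[OF assms(1) q(1), of a l b] wval_ge[OF assms(2) p(1), of a l b]
      by (simp add: algebra_simps)
  next
    show "of_int \<rho> * (of_int i0 / of_nat l + of_int i1 / of_nat l - 1) + of_int \<sigma> * (of_nat j0 + of_nat j1 - 1)
          = wval l \<rho> \<sigma> Q + wval l \<rho> \<sigma> P - of_int (\<rho> + \<sigma>)"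
      using q(2) p(2) by (simp add: algebra_simps)
  qed
qed

lemma exists_adjacent_direction_pos:
  fixes \<alpha> \<beta> :: rat
  assumes V: "(\<rho>, \<sigma>) \<in> Vset" and pos: "0 < of_int \<rho> * \<alpha> + of_int \<sigma> * \<beta>"
  obtains \<rho>'' \<sigma>'' where "(\<rho>'', \<sigma>'') \<in> Vset" "\<rho>'' * \<sigma> - \<sigma>'' * \<rho> = 1"
    and "0 < of_int \<rho>'' * \<alpha> + of_int \<sigma>'' * \<beta>"
proof -
  let ?g = "\<lambda>a b. of_int a * \<alpha> + of_int b * \<beta>"
  have sum: "\<rho> + \<sigma> > 0" and "gcd \<rho> \<sigma> = 1" using V by (auto simp: Vset_def)
  then obtain u v where uv: "u * \<sigma> - v * \<rho> = 1"
    using bezout_int[of \<sigma> \<rho>] by (metis diff_minus_eq_add gcd.commute mult_minus_left)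
  text \<open>Adding a large multiple N of (\<rho>,\<sigma>) to (u,v) keeps the determinant 1 and
    makes both the linear form and the coordinate sum positive.\<close>
  obtain N1 :: nat where N1: "\<bar>?g u v\<bar> < of_nat N1 * ?g \<rho> \<sigma>"
    using ex_less_of_nat_mult[OF pos] by blast
  define N :: int where "N = int N1 + \<bar>u + v\<bar> + 1"
  have "of_nat N1 * ?g \<rho> \<sigma> \<le> of_int N * ?g \<rho> \<sigma>"
    using pos unfolding N_def by (intro mult_right_mono) auto
  with N1 have "0 < of_int N * ?g \<rho> \<sigma> + ?g u v" by linarith
  moreover have "?g (N * \<rho> + u) (N * \<sigma> + v) = of_int N * ?g \<rho> \<sigma> + ?g u v"
    by (simp add: algebra_simps)
  ultimately have g_pos: "0 < ?g (N * \<rho> + u) (N * \<sigma> + v)" by simp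
  have det: "(N * \<rho> + u) * \<sigma> - (N * \<sigma> + v) * \<rho> = 1"
    using uv by (simp add: algebra_simps)
  have uv_N: "\<bar>u + v\<bar> < N" unfolding N_def by simp
  then have "N \<le> N * (\<rho> + \<sigma>)" using sum by (simp add: mult_le_cancel_left1)
      (meson abs_ge_zero le_less_trans not_less_iff_gr_or_eq)
  with uv_N have "(N * \<rho> + u) + (N * \<sigma> + v) > 0" by (simp add: algebra_simps)
  moreover have "gcd (N * \<rho> + u) (N * \<sigma> + v) = 1"
    using dvd_diff[of "gcd (N * \<rho> + u) (N * \<sigma> + v)"] det
    by (metis dvd_mult gcd_dvd1 gcd_dvd2 is_unit_gcd_iff mult.commute one_dvd)
  ultimately have "(N * \<rho> + u, N * \<sigma> + v) \<in> Vset" by (simp add: Vset_def)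
  with det g_pos show ?thesis using that by blast
qed

lemma dir_less_Vset_cross_nonneg:
  assumes "a \<in> Vset" "b \<in> Vset" "dir_less a b"
  shows "fst a * snd b - snd a * fst b \<ge> 0"
proof -
  have "x \<in> Vset \<Longrightarrow> x \<noteq> (1, -1) \<and> x \<noteq> (-1, 1)" for x :: "int \<times> int"
    by (auto simp: Vset_def)
  then show ?thesis using assms by (auto simp: dir_less_def dir_le_def)
qed

lemma linear_pos_between_adjacent:
  fixes \<alpha> \<beta> :: rat and r s r'' s'' r' s' :: int
  assumes det: "r'' * s - s'' * r = 1"
    and pos'': "0 < of_int r'' * \<alpha> + of_int s'' * \<beta>" and pos: "0 < of_int r * \<alpha> + of_int s * \<beta>"
    and "r' * s - s' * r \<ge> 0" "r'' * s' - s'' * r' \<ge> 0"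
    and nz: "(r', s') \<noteq> (0, 0)"
  shows "0 < of_int r' * \<alpha> + of_int s' * \<beta>"
proof -
  define A B where "A = r' * s - s' * r" and "B = r'' * s' - s'' * r'"
  text \<open>Cramer's rule for the unimodular basis (r'',s''), (r,s).\<close>
  have "r' * (r'' * s - s'' * r) = A * r'' + B * r" "s' * (r'' * s - s'' * r) = A * s'' + B * s"
    unfolding A_def B_def by algebra+
  then have r': "r' = A * r'' + B * r" and s': "s' = A * s'' + B * s" using det by simp_all
  have "A \<ge> 0" "B \<ge> 0" using assms(4,5) unfolding A_def B_def by auto
  moreover have "A \<noteq> 0 \<or> B \<noteq> 0" using nz r' s' by auto
  moreover have "of_int r' * \<alpha> + of_int s' * \<beta>
      = of_int A * (of_int r'' * \<alpha> + of_int s'' * \<beta>) + of_int B * (of_int r * \<alpha> + of_int s * \<beta>)"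
    by (simp add: r' s' algebra_simps)
  moreover have "0 \<le> of_int A * (of_int r'' * \<alpha> + of_int s'' * \<beta>)"
    "0 \<le> of_int B * (of_int r * \<alpha> + of_int s * \<beta>)"
    using \<open>A \<ge> 0\<close> \<open>B \<ge> 0\<close> pos pos'' by simp_all
  moreover have "0 < of_int A * (of_int r'' * \<alpha> + of_int s'' * \<beta>)
      \<or> 0 < of_int B * (of_int r * \<alpha> + of_int s * \<beta>)"
    using \<open>A \<ge> 0\<close> \<open>B \<ge> 0\<close> \<open>A \<noteq> 0 \<or> B \<noteq> 0\<close> pos pos'' by auto
  ultimately show ?thesis by linarith
qed

theorem corollary3p4:
  fixes l :: nat and \<rho> \<sigma> :: int and P Q :: "'k::field_char_0 wl"
  assumes "l \<ge> 1"
    and "(\<rho>, \<sigma>) \<in> Vset"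
    and "is_wl P" and "is_wl Q" and "P \<noteq> (\<lambda>_. 0)" and "Q \<noteq> (\<lambda>_. 0)"
    and "\<exists>c. c \<noteq> 0 \<and> wcomm l Q P = wconst c"
    and "wcomm_rs l \<rho> \<sigma> Q P = (\<lambda>_. 0)"
  shows "\<exists>\<rho>'' \<sigma>''. (\<rho>'', \<sigma>'') \<in> Vbar \<and> dir_less (\<rho>'', \<sigma>'') (\<rho>, \<sigma>) \<and>
           (\<forall>\<rho>' \<sigma>'. (\<rho>', \<sigma>') \<in> Vset \<and> dir_less (\<rho>'', \<sigma>'') (\<rho>', \<sigma>') \<and>
                dir_less (\<rho>', \<sigma>') (\<rho>, \<sigma>) \<longrightarrow> wcomm_rs l \<rho>' \<sigma>' Q P = (\<lambda>_. 0))"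
proof -
  obtain c where c: "c \<noteq> 0" "wcomm l Q P = wconst c" using assms(7) by blast
  note rs_zero_iff = wcomm_rs_eq_0_iff_const[OF c]
  obtain \<alpha> \<beta> :: rat
    where minorant: "\<And>a b. of_int a * \<alpha> + of_int b * \<beta> \<le> wval l a b Q + wval l a b P - of_int (a + b)"
      and "of_int \<rho> * \<alpha> + of_int \<sigma> * \<beta> = wval l \<rho> \<sigma> Q + wval l \<rho> \<sigma> P - of_int (\<rho> + \<sigma>)"
    using wval_excess_supporting_linear[OF assms(4,3,6,5)] by blast
  with assms(8) rs_zero_iff have pos: "0 < of_int \<rho> * \<alpha> + of_int \<sigma> * \<beta>" by simp
  obtain \<rho>'' \<sigma>'' where V'': "(\<rho>'', \<sigma>'') \<in> Vset" and det: "\<rho>'' * \<sigma> - \<sigma>'' * \<rho> = 1"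
    and pos'': "0 < of_int \<rho>'' * \<alpha> + of_int \<sigma>'' * \<beta>"
    using exists_adjacent_direction_pos[OF assms(2) pos] by blast
  have "(\<rho>'', \<sigma>'') \<in> Vbar" "dir_less (\<rho>'', \<sigma>'') (\<rho>, \<sigma>)"
    using V'' assms(2) det by (auto simp: Vset_def Vbar_def dir_less_def dir_le_def)
  moreover have "wcomm_rs l \<rho>' \<sigma>' Q P = (\<lambda>_. 0)"
    if "(\<rho>', \<sigma>') \<in> Vset" "dir_less (\<rho>'', \<sigma>'') (\<rho>', \<sigma>')" "dir_less (\<rho>', \<sigma>') (\<rho>, \<sigma>)" for \<rho>' \<sigma>'
  proof -
    have "0 < of_int \<rho>' * \<alpha> + of_int \<sigma>' * \<beta>"
      using linear_pos_between_adjacent[OF det pos'' pos]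
        dir_less_Vset_cross_nonneg[OF that(1) assms(2) that(3)]
        dir_less_Vset_cross_nonneg[OF V'' that(1,2)] that(1)
      by (auto simp: Vset_def)
    then show ?thesis using minorant[of \<rho>' \<sigma>'] rs_zero_iff by simp
  qed
  ultimately show ?thesis by blast
qed

end
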